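(* For a discrete memoryless channel $Q$ with strictly positive capacity (in the asynchronous communication model described in the context), any asynchronism exponent strictly less than $\max_{x\in\mathcal X}D(Q(\cdot|x)\|Q(\cdot|\star))$ is achievable by a coding strategy (a sequence of codes with sequential decoders indexed by blocklength $N$, with $M=M_N$ messages) that satisfies $\lim_{N\to\infty}\frac{\ln M}{N}>0$.
   Context: Model. A discrete memoryless channel has finite input alphabet $\mathcal X$, finite output alphabet $\mathcal Y$, transition probabilities $Q(y|x)$, and a distinguished "noise" input symbol $\star\in\mathcal X$; for every $y$ there is $x$ with $Q(y|x)>0$. A code consists of $M\ge2$ equally likely messages, codewords $c^N(m)\in\mathcal X^N$, and a sequential decoder. The asynchronism level is an integer $A\ge1$: the start time $\nu$ is uniform on $\{1,\dots,A\}$, independent of the message. Given message $m$ and $\nu$, outputs $Y_1,Y_2,\dots$ are independent with $Y_i\sim Q(\cdot|\star)$ if $i\le\nu-1$ or $i\ge\nu+N$, and $Y_i\sim Q(\cdot|c_{i-\nu+1}(m))$ for $\nu\le i\le\nu+N-1$. The receiver knows $A$ and the code but not $\nu$. A decoder is $(\tau,\phi)$ with $\tau$ a stopping time w.r.t. $Y_1,Y_2,\dots$ and $\phi$ a function of $Y_1,\dots,Y_\tau$ returning a message. With $\mathbb P_{m,l},\mathbb E_{m,l}$ conditioning on message $m$ and $\nu=l$: $\mathbb P(\mathcal E)=\frac1{AM}\sum_{m,l}\mathbb P_{m,l}(\phi\neq m)$, $\mathbb E(\tau-\nu)^+=\frac1{AM}\sum_{m,l}\mathbb E_{m,l}(\tau-l)^+$,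 rate $R=\ln M/\mathbb E(\tau-\nu)^+$. An asynchronism exponent $\alpha$ is achievable (at rate $R$) if for every $\varepsilon>0$ there is a code with (sufficiently large) blocklength $N$ operating at asynchronism level $A=e^{(\alpha-\varepsilon)N}$ with rate at least $R-\varepsilon$ and $\mathbb P(\mathcal E)\le\varepsilon$; "achievable" without a rate means achievable at rate $0$. $D$ is Kullback–Leibler divergence (possibly $+\infty$). *)

theory Defs
  imports "HOL-Probability.Probability"
begin

text \<open>Output sequences are y :: nat \<Rightarrow> 'y, the paper's Y_i being y i for i \<ge> 1
 (y 0 is an unused dummy coordinate that decoders may not look at).\<close>

definition kl_div :: "'y::finite pmf \<Rightarrow> 'y pmf \<Rightarrow> ereal" where
  "kl_div p q =
     (if \<forall>y. pmf p y > 0 \<longrightarrow> pmf q y > 0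
      then ereal (\<Sum>y\<in>UNIV. if pmf p y = 0 then 0 else pmf p y * ln (pmf p y / pmf q y))
      else \<infinity>)"

definition mutual_info :: "('x::finite \<Rightarrow> 'y::finite pmf) \<Rightarrow> 'x pmf \<Rightarrow> real" where
  "mutual_info Q P =
     (\<Sum>x\<in>UNIV. \<Sum>y\<in>UNIV.
        if pmf P x * pmf (Q x) y = 0 then 0
        else pmf P x * pmf (Q x) y *
             ln (pmf (Q x) y / (\<Sum>x'\<in>UNIV. pmf P x' * pmf (Q x') y)))"

definition capacity :: "('x::finite \<Rightarrow> 'y::finite pmf) \<Rightarrow> real" where
  "capacity Q = (SUP P. mutual_info Q P)"

text \<open>Sequential decoder (tau, phi): tau a stopping time w.r.t. Y_1, Y_2, ...
 and phi a function of Y_1..Y_tau.\<close>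
definition valid_decoder :: "((nat \<Rightarrow> 'y) \<Rightarrow> nat) \<times> ((nat \<Rightarrow> 'y) \<Rightarrow> nat) \<Rightarrow> bool" where
  "valid_decoder d \<longleftrightarrow>
     (\<forall>y y'. (\<forall>i\<in>{1..fst d y}. y i = y' i) \<longrightarrow> fst d y' = fst d y \<and> snd d y' = snd d y)"

definition out_measure ::
  "('x \<Rightarrow> 'y pmf) \<Rightarrow> 'x \<Rightarrow> nat \<Rightarrow> (nat \<Rightarrow> 'x) \<Rightarrow> nat \<Rightarrow> (nat \<Rightarrow> 'y) measure" where
  "out_measure Q star N c l =
     PiM UNIV (\<lambda>i. measure_pmf (if l \<le> i \<and> i < l + N then Q (c (i - l)) else Q star))"

definition error_prob ::
  "('x \<Rightarrow> 'y pmf) \<Rightarrow> 'x \<Rightarrow> nat \<Rightarrow> nat \<Rightarrow> (nat \<Rightarrow> nat \<Rightarrow> 'x)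
   \<Rightarrow> ((nat \<Rightarrow> 'y) \<Rightarrow> nat) \<times> ((nat \<Rightarrow> 'y) \<Rightarrow> nat) \<Rightarrow> nat \<Rightarrow> real" where
  "error_prob Q star N M cw d A =
     (1 / (real A * real M)) *
     (\<Sum>m<M. \<Sum>l\<in>{1..A}. measure (out_measure Q star N (cw m) l) {y. snd d y \<noteq> m})"

definition async_level :: "real \<Rightarrow> real \<Rightarrow> nat \<Rightarrow> nat" where
  "async_level \<alpha> \<epsilon> N = nat \<lceil>exp ((\<alpha> - \<epsilon>) * real N)\<rceil>"

end

theory Submission
  imports Defs "HOL-Real_Asymp.Real_Asymp"
begin

text \<open>Take a letter \<open>a\<close> maximising \<open>D(Q(\<cdot>|a) \<parallel> Q(\<cdot>|\<star>))\<close> and codewords consisting of a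
  preamble of \<open>\<beta>N\<close> copies of \<open>a\<close> followed by a data part over \<open>{a, \<star>}\<close>; the data parts are
  chosen greedily (Gilbert--Varshamov) so that any two codewords differ in at least \<open>N/j\<close>
  positions at every overlapping relative shift, with \<open>2\<^bsup>N/k\<^esup>\<close> messages. As no delay constraint
  is imposed, the decoder reads all \<open>A + N\<close> symbols and picks the most likely pair of start
  time and message. With \<open>T = \<theta>\<beta>N\<close>, an error needs one of three events: the true pair is not
  \<open>e\<^sup>T\<close> times as likely as pure noise (Chernoff bound on the preamble, using \<open>\<theta> < D\<close>); a
  non-overlapping pair is \<open>e\<^sup>T\<close> times as likely as noise (change of measure, probability
  \<open>\<le> AM e\<^sup>-\<^sup>T\<close>, small when \<open>\<alpha> + (ln 2)/k < \<beta>\<theta>\<close>); or an overlapping wrong pair wins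
  (Bhattacharyya bound over the \<open>N/j\<close> mismatches, for \<open>2NM\<close> pairs). Positive capacity only
  serves to make \<open>D\<close> positive.\<close>

section \<open>Finite products of probability mass functions\<close>

lemma sum_pmf_UNIV: "(\<Sum>y\<in>(UNIV::'y::finite set). pmf p y) = 1"
  by (rule sum_pmf_eq_1) auto

lemma real_sqrt_prod: "sqrt (prod f A) = (\<Prod>i\<in>A. sqrt (f i))"
  by (induction A rule: infinite_finite_induct) (auto simp: real_sqrt_mult)

lemma sum_PiE_UNIV_prod:
  fixes f :: "nat \<Rightarrow> 'y::finite \<Rightarrow> real"
  assumes "finite J"
  shows "(\<Sum>z\<in>PiE J (\<lambda>_. UNIV). \<Prod>i\<in>J. f i (z i)) = (\<Prod>i\<in>J. \<Sum>y\<in>UNIV. f i y)"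
  using prod_sum_PiE[of J "\<lambda>_. UNIV" f] assms by simp

lemma prod_if_eq_power_card:
  fixes b :: real
  assumes "finite J"
  shows "(\<Prod>i\<in>J. if P i then 1 else b) = b ^ card {i\<in>J. \<not> P i}"
proof -
  have "(\<Prod>i\<in>J. if P i then 1 else b) = (\<Prod>i\<in>{i\<in>J. \<not> P i}. b)"
    using assms by (intro prod.mono_neutral_cong_right) auto
  then show ?thesis by simp
qed

lemma measure_PiM_pmf_finite_dependence:
  fixes p :: "nat \<Rightarrow> 'y::finite pmf"
  assumes J: "finite J" and dep: "\<And>y y'. (\<forall>i\<in>J. y i = y' i) \<Longrightarrow> y \<in> E \<longleftrightarrow> y' \<in> E"
  shows "measure (PiM UNIV (\<lambda>i. measure_pmf (p i))) E =
     (\<Sum>z\<in>PiE J (\<lambda>_. UNIV) \<inter> E. \<Prod>i\<in>J. pmf (p i) (z i))"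
proof -
  let ?M = "\<lambda>i. measure_pmf (p i)"
  interpret P: product_prob_space ?M UNIV
    by (rule product_prob_spaceI) (simp add: prob_space_measure_pmf)
  let ?X = "PiE J (\<lambda>_. UNIV) \<inter> E"
  have finX: "finite ?X" using J by (intro finite_Int disjI1 finite_PiE) auto
  have singleton: "{z} = PiE J (\<lambda>i. {z i})" if "z \<in> ?X" for z
    using that by (auto simp: PiE_iff extensional_def fun_eq_iff) (metis)
  have sing: "{z} \<in> sets (PiM J ?M)" if "z \<in> ?X" for z
    unfolding singleton[OF that] using J by (intro sets_PiM_I_finite) auto
  have Xs: "?X \<in> sets (PiM J ?M)"
  proof -
    have "?X = (\<Union>z\<in>?X. {z})" by auto
    also have "\<dots> \<in> sets (PiM J ?M)" using finX sing by (intro sets.finite_UN) auto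
    finally show ?thesis .
  qed
  have embE: "prod_emb UNIV ?M J ?X = E"
  proof -
    have "restrict x J \<in> E \<longleftrightarrow> x \<in> E" for x by (rule dep) simp
    then show ?thesis unfolding prod_emb_def by (auto simp: space_PiM)
  qed
  have "emeasure (PiM UNIV ?M) E = emeasure (PiM J ?M) ?X"
    using P.emeasure_PiM_emb'[of J ?X] J Xs embE by simp
  also have "\<dots> = (\<Sum>z\<in>?X. emeasure (PiM J ?M) {z})"
    using finX sing by (rule emeasure_eq_sum_singleton)
  also have "\<dots> = (\<Sum>z\<in>?X. ennreal (\<Prod>i\<in>J. pmf (p i) (z i)))"
  proof (rule sum.cong[OF refl])
    fix z assume z: "z \<in> ?X"
    have "emeasure (PiM J ?M) {z} = (\<Prod>i\<in>J. emeasure (?M i) {z i})"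
      unfolding singleton[OF z] using J by (simp add: P.emeasure_PiM)
    then show "emeasure (PiM J ?M) {z} = ennreal (\<Prod>i\<in>J. pmf (p i) (z i))"
      by (simp add: emeasure_pmf_single prod_ennreal)
  qed
  also have "\<dots> = ennreal (\<Sum>z\<in>?X. \<Prod>i\<in>J. pmf (p i) (z i))"
    by (simp add: sum_ennreal prod_nonneg)
  finally show ?thesis
    by (simp add: measure_def sum_nonneg prod_nonneg)
qed

section \<open>Divergences\<close>

definition bhattacharyya :: "'y::finite pmf \<Rightarrow> 'y pmf \<Rightarrow> real" where
  "bhattacharyya p q = (\<Sum>y\<in>UNIV. sqrt (pmf p y * pmf q y))"

definition chernoff_coeff :: "real \<Rightarrow> 'y::finite pmf \<Rightarrow> 'y pmf \<Rightarrow> real" where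
  "chernoff_coeff s p q = (\<Sum>y\<in>UNIV. pmf p y powr (1 - s) * pmf q y powr s)"

lemma bhattacharyya_nonneg: "bhattacharyya p q \<ge> 0"
  unfolding bhattacharyya_def by (intro sum_nonneg) auto

lemma bhattacharyya_self: "bhattacharyya p p = 1"
  unfolding bhattacharyya_def by (simp add: sum_pmf_UNIV)

lemma bhattacharyya_commute: "bhattacharyya p q = bhattacharyya q p"
  unfolding bhattacharyya_def by (simp add: mult.commute)

lemma sum_average_pmf:
  fixes p q :: "'y::finite pmf"
  shows "(\<Sum>y\<in>UNIV. (pmf p y + pmf q y) / 2) = 1"
  by (simp add: sum_divide_distrib[symmetric] sum.distrib sum_pmf_UNIV)

lemma bhattacharyya_le_1: "bhattacharyya p q \<le> 1"
  unfolding bhattacharyya_def sum_average_pmf[of p q, symmetric]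
  by (intro sum_mono arith_geo_mean_sqrt pmf_nonneg)

lemma bhattacharyya_less_1:
  assumes "p \<noteq> q"
  shows "bhattacharyya p q < 1"
  unfolding bhattacharyya_def sum_average_pmf[of p q, symmetric]
proof (rule sum_strict_mono_ex1)
  show "\<forall>y\<in>UNIV. sqrt (pmf p y * pmf q y) \<le> (pmf p y + pmf q y) / 2"
    by (intro ballI arith_geo_mean_sqrt pmf_nonneg)
  obtain y where y: "pmf p y \<noteq> pmf q y" using assms pmf_eqI by metis
  have "(sqrt (pmf p y) - sqrt (pmf q y))\<^sup>2 > 0" using y by simp
  then have "sqrt (pmf p y * pmf q y) < (pmf p y + pmf q y) / 2"
    by (simp add: power2_eq_square algebra_simps real_sqrt_mult)
  then show "\<exists>y\<in>UNIV. sqrt (pmf p y * pmf q y) < (pmf p y + pmf q y) / 2" by blast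
qed simp

lemma chernoff_coeff_nonneg: "chernoff_coeff s p q \<ge> 0"
  unfolding chernoff_coeff_def by (intro sum_nonneg) auto

lemma chernoff_coeff_self: "chernoff_coeff s q q = 1"
  unfolding chernoff_coeff_def by (simp add: powr_add[symmetric] sum_pmf_UNIV)

lemma chernoff_coeff_eq_sum_exp:
  fixes p q :: "'y::finite pmf"
  shows "chernoff_coeff s p q =
    (\<Sum>y | pmf p y > 0 \<and> pmf q y > 0. pmf p y * exp (s * ln (pmf q y / pmf p y)))"
  unfolding chernoff_coeff_def
proof (rule sum.mono_neutral_cong_right)
  fix y assume "y \<in> {y. pmf p y > 0 \<and> pmf q y > 0}"
  then have "pmf p y > 0" "pmf q y > 0" by auto
  then have "pmf p y powr (1 - s) * pmf q y powr s = exp ((1 - s) * ln (pmf p y) + s * ln (pmf q y))"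
    by (simp add: powr_def exp_add)
  also have "(1 - s) * ln (pmf p y) + s * ln (pmf q y) = ln (pmf p y) + s * ln (pmf q y / pmf p y)"
    using \<open>pmf p y > 0\<close> \<open>pmf q y > 0\<close> by (simp add: ln_div algebra_simps)
  finally show "pmf p y powr (1 - s) * pmf q y powr s = pmf p y * exp (s * ln (pmf q y / pmf p y))"
    using \<open>pmf p y > 0\<close> by (simp add: exp_add)
qed (auto simp: order_le_less[of 0 "pmf _ _"])

lemma pmf_le_imp_eq:
  fixes p q :: "'y::finite pmf"
  assumes "\<And>y. pmf p y \<le> pmf q y"
  shows "p = q"
proof -
  have "(\<Sum>y\<in>UNIV. pmf q y - pmf p y) = 0" by (simp add: sum_subtractf sum_pmf_UNIV)
  then have "\<forall>y\<in>UNIV. pmf q y - pmf p y = 0" using assms by (subst (asm) sum_nonneg_eq_0_iff) auto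
  then show ?thesis by (intro pmf_eqI) simp
qed

lemma diff_le_mult_ln_div:
  fixes x y :: real
  assumes x: "0 < x" and y: "0 < y"
  shows "x - y \<le> x * ln (x / y)" and "x \<noteq> y \<Longrightarrow> x - y < x * ln (x / y)"
proof -
  have eq: "x * ln (x / y) = x * (- ln (y / x))" using x y by (simp add: ln_div)
  have diff: "x - y = x * (1 - y / x)" using x by (simp add: right_diff_distrib)
  show "x - y \<le> x * ln (x / y)"
    unfolding eq diff using x y ln_le_minus_one[of "y / x"] by (intro mult_left_mono) auto
  assume "x \<noteq> y"
  then have "ln (y / x) \<noteq> y / x - 1" using x y ln_eq_minus_one[of "y / x"] by auto
  then have "ln (y / x) < y / x - 1" using x y ln_le_minus_one[of "y / x"] by simp
  then show "x - y < x * ln (x / y)" unfolding eq diff using x by (intro mult_strict_left_mono) auto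
qed

lemma kl_div_self: "kl_div p p = 0"
  unfolding kl_div_def by (simp add: sum.neutral)

lemma kl_div_pos:
  fixes p q :: "'y::finite pmf"
  assumes "p \<noteq> q"
  shows "kl_div p q > 0"
proof (cases "\<forall>y. pmf p y > 0 \<longrightarrow> pmf q y > 0")
  case True
  define S where "S = {y. pmf p y > 0}"
  have "(\<Sum>y\<in>S. pmf p y) = 1"
    using sum_pmf_UNIV[of p] unfolding S_def
    by (subst (asm) sum.mono_neutral_cong_right[of UNIV "{y. pmf p y > 0}" "pmf p" "pmf p"])
       (auto simp: order_le_less)
  moreover have "(\<Sum>y\<in>S. pmf q y) \<le> 1"
    using sum_mono2[of UNIV S "pmf q"] by (simp add: sum_pmf_UNIV)
  ultimately have "0 \<le> (\<Sum>y\<in>S. pmf p y - pmf q y)" by (simp add: sum_subtractf)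
  also have "\<dots> < (\<Sum>y\<in>S. pmf p y * ln (pmf p y / pmf q y))"
  proof (rule sum_strict_mono_ex1)
    show "\<forall>y\<in>S. pmf p y - pmf q y \<le> pmf p y * ln (pmf p y / pmf q y)"
      using True unfolding S_def by (auto intro: diff_le_mult_ln_div)
    have "\<exists>y\<in>S. pmf p y \<noteq> pmf q y"
    proof (rule ccontr)
      assume agree: "\<not> (\<exists>y\<in>S. pmf p y \<noteq> pmf q y)"
      have "pmf p y \<le> pmf q y" for y
      proof (cases "y \<in> S")
        case False
        then have "\<not> 0 < pmf p y" unfolding S_def by simp
        then show ?thesis using pmf_nonneg[of q y] by linarith
      qed (use agree in auto)
      then show False using assms pmf_le_imp_eq by blast
    qed
    then show "\<exists>y\<in>S. pmf p y - pmf q y < pmf p y * ln (pmf p y / pmf q y)"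
      using True unfolding S_def by (auto intro: diff_le_mult_ln_div)
  qed simp
  also have "\<dots> = (\<Sum>y\<in>UNIV. if pmf p y = 0 then 0 else pmf p y * ln (pmf p y / pmf q y))"
    unfolding S_def by (rule sum.mono_neutral_cong_left) (auto simp: order_le_less)
  finally show ?thesis unfolding kl_div_def using True by simp
qed (auto simp: kl_div_def)

text \<open>The derivative of \<open>s \<mapsto> chernoff_coeff s p q * exp (s * \<theta>)\<close> at \<open>0\<close> is
  \<open>\<theta> - kl_div p q\<close> when \<open>p\<close> is absolutely continuous w.r.t. \<open>q\<close>; otherwise its value
  at \<open>0\<close> is already below \<open>1\<close>.\<close>
lemma eventually_chernoff_coeff_less_1:
  fixes p q :: "'y::finite pmf"
  assumes \<theta>: "ereal \<theta> < kl_div p q"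
  shows "eventually (\<lambda>s. chernoff_coeff s p q * exp (s * \<theta>) < 1) (at_right 0)"
proof -
  define S where "S = {y. pmf p y > 0 \<and> pmf q y > 0}"
  define c where "c y = ln (pmf q y / pmf p y)" for y
  define F where "F s = (\<Sum>y\<in>S. pmf p y * exp (s * c y)) * exp (s * \<theta>)" for s
  have F: "chernoff_coeff s p q * exp (s * \<theta>) = F s" for s
    unfolding F_def S_def c_def chernoff_coeff_eq_sum_exp ..
  have F0: "F 0 = (\<Sum>y\<in>S. pmf p y)" unfolding F_def by simp
  have "(\<Sum>y\<in>S. pmf p y) \<le> 1"
    using sum_mono2[of UNIV S "pmf p"] by (simp add: sum_pmf_UNIV)
  then consider "F 0 < 1" | "F 0 = 1" unfolding F0 by linarith
  then have "eventually (\<lambda>s. F s < 1) (at_right 0)"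
  proof cases
    case 1
    have "isCont F 0" unfolding F_def by (intro continuous_intros)
    then have "(F \<longlongrightarrow> F 0) (at_right 0)" by (simp add: isCont_def filterlim_at_split)
    with 1 show ?thesis by (intro order_tendstoD(2)) auto
  next
    case 2
    have abs_cont: "pmf q y > 0" if "pmf p y > 0" for y
    proof (rule ccontr)
      assume "\<not> pmf q y > 0"
      then have "S \<subseteq> UNIV - {y}" unfolding S_def by auto
      then have "(\<Sum>y\<in>S. pmf p y) + pmf p y \<le> (\<Sum>y\<in>UNIV - {y}. pmf p y) + pmf p y"
        by (intro add_right_mono sum_mono2) auto
      also have "\<dots> = 1" by (simp add: sum_diff1 sum_pmf_UNIV)
      finally show False using 2 that F0 by simp
    qed
    have pos: "pmf p y \<noteq> 0 \<longleftrightarrow> pmf p y > 0" for y using pmf_nonneg[of p y] by linarith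
    have "kl_div p q = ereal (\<Sum>y\<in>S. pmf p y * ln (pmf p y / pmf q y))"
      unfolding kl_div_def using abs_cont
      by (auto intro!: sum.mono_neutral_cong_right simp: S_def pos split: if_splits)
    also have "(\<Sum>y\<in>S. pmf p y * ln (pmf p y / pmf q y)) = - (\<Sum>y\<in>S. pmf p y * c y)"
      unfolding c_def S_def by (simp add: sum_negf[symmetric] ln_div algebra_simps)
    finally have neg: "(\<Sum>y\<in>S. pmf p y * c y) + F 0 * \<theta> < 0" using \<theta> 2 by simp
    have "DERIV F 0 :> (\<Sum>y\<in>S. pmf p y * c y) * exp (0 * \<theta>) + (\<Sum>y\<in>S. pmf p y * exp (0 * c y)) * \<theta>"
      unfolding F_def by (rule derivative_eq_intros refl | simp add: mult.commute)+
    then have "DERIV F 0 :> (\<Sum>y\<in>S. pmf p y * c y) + F 0 * \<theta>" by (simp add: F0)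
    from DERIV_neg_dec_right[OF this neg] obtain d where "d > 0" "\<forall>h>0. h < d \<longrightarrow> F h < F 0"
      by auto
    then show ?thesis using 2 unfolding eventually_at_right_field by auto
  qed
  then show ?thesis unfolding F .
qed

lemma capacity_pos_imp_nonconstant:
  fixes Q :: "'x::finite \<Rightarrow> 'y::finite pmf"
  assumes "capacity Q > 0"
  shows "\<exists>x. Q x \<noteq> Q star"
proof (rule ccontr)
  define c where "c = Q star"
  assume "\<not> (\<exists>x. Q x \<noteq> Q star)"
  then have Q_const: "Q x = c" for x unfolding c_def by auto
  have "mutual_info Q P = 0" for P
  proof -
    have output_law: "(\<Sum>x'\<in>UNIV. pmf P x' * pmf c y) = pmf c y" for y
      by (simp add: sum_distrib_right[symmetric] sum_pmf_UNIV)
    show ?thesis unfolding mutual_info_def Q_const output_law by (intro sum.neutral ballI) simp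
  qed
  then have "capacity Q = 0" unfolding capacity_def by simp
  with assms show False by simp
qed

section \<open>Likelihoods of channel input sequences\<close>

definition channel_input :: "'x \<Rightarrow> nat \<Rightarrow> (nat \<Rightarrow> 'x) \<Rightarrow> nat \<Rightarrow> nat \<Rightarrow> 'x" where
  "channel_input star N c t i = (if t \<le> i \<and> i < t + N then c (i - t) else star)"

lemma out_measure_channel_input:
  "out_measure Q star N c l = PiM UNIV (\<lambda>i. measure_pmf (Q (channel_input star N c l i)))"
  unfolding out_measure_def channel_input_def by (simp add: if_distrib)

definition lik :: "('x \<Rightarrow> 'y pmf) \<Rightarrow> nat set \<Rightarrow> (nat \<Rightarrow> 'x) \<Rightarrow> (nat \<Rightarrow> 'y) \<Rightarrow> real" where
  "lik Q J h z = (\<Prod>i\<in>J. pmf (Q (h i)) (z i))"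

lemma lik_nonneg: "lik Q J h z \<ge> 0"
  unfolding lik_def by (simp add: prod_nonneg)

lemma lik_cong: "(\<And>i. i \<in> J \<Longrightarrow> z i = z' i) \<Longrightarrow> lik Q J h z = lik Q J h z'"
  unfolding lik_def by (intro prod.cong) auto

lemma sum_lik_eq_1:
  fixes Q :: "'x \<Rightarrow> 'y::finite pmf"
  assumes "finite J"
  shows "(\<Sum>z\<in>PiE J (\<lambda>_. UNIV). lik Q J h z) = 1"
  unfolding lik_def using sum_PiE_UNIV_prod[OF assms, of "\<lambda>i. pmf (Q (h i))"]
  by (simp add: sum_pmf_UNIV)

lemma lik_le_other_le_bhattacharyya:
  fixes Q :: "'x \<Rightarrow> 'y::finite pmf"
  assumes J: "finite J"
  shows "(\<Sum>z\<in>PiE J (\<lambda>_. UNIV). if lik Q J h z \<le> lik Q J h' z then lik Q J h z else 0)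
         \<le> (\<Prod>i\<in>J. bhattacharyya (Q (h i)) (Q (h' i)))"
proof -
  have "(\<Sum>z\<in>PiE J (\<lambda>_. UNIV). if lik Q J h z \<le> lik Q J h' z then lik Q J h z else 0)
       \<le> (\<Sum>z\<in>PiE J (\<lambda>_. UNIV). \<Prod>i\<in>J. sqrt (pmf (Q (h i)) (z i) * pmf (Q (h' i)) (z i)))"
  proof (rule sum_mono)
    fix z
    let ?a = "lik Q J h z" and ?b = "lik Q J h' z"
    have "(if ?a \<le> ?b then ?a else 0) \<le> sqrt (?a * ?b)"
    proof (cases "?a \<le> ?b")
      case True
      then have "sqrt (?a * ?a) \<le> sqrt (?a * ?b)"
        using lik_nonneg[of Q J h z] by (intro real_sqrt_le_mono mult_left_mono)
      then show ?thesis using True lik_nonneg[of Q J h z] by simp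
    qed (simp add: lik_nonneg)
    also have "\<dots> = (\<Prod>i\<in>J. sqrt (pmf (Q (h i)) (z i) * pmf (Q (h' i)) (z i)))"
      unfolding lik_def by (simp add: prod.distrib[symmetric] real_sqrt_prod)
    finally show "(if ?a \<le> ?b then ?a else 0) \<le> \<dots>" .
  qed
  also have "\<dots> = (\<Prod>i\<in>J. bhattacharyya (Q (h i)) (Q (h' i)))"
    unfolding bhattacharyya_def using J by (rule sum_PiE_UNIV_prod)
  finally show ?thesis .
qed

lemma lik_le_other_le_bhattacharyya_power:
  fixes Q :: "'x \<Rightarrow> 'y::finite pmf"
  assumes J: "finite J" and h: "\<And>i. h i = a \<or> h i = b" and h': "\<And>i. h' i = a \<or> h' i = b"
  shows "(\<Sum>z\<in>PiE J (\<lambda>_. UNIV). if lik Q J h z \<le> lik Q J h' z then lik Q J h z else 0)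
         \<le> bhattacharyya (Q a) (Q b) ^ card {i\<in>J. h i \<noteq> h' i}"
proof -
  have "bhattacharyya (Q (h i)) (Q (h' i)) = (if h i = h' i then 1 else bhattacharyya (Q a) (Q b))" for i
    using h[of i] h'[of i] by (auto simp: bhattacharyya_self bhattacharyya_commute)
  then show ?thesis
    using lik_le_other_le_bhattacharyya[OF J, of Q h h'] prod_if_eq_power_card[OF J] by simp
qed

lemma lik_below_threshold_le_chernoff:
  fixes Q :: "'x \<Rightarrow> 'y::finite pmf"
  assumes J: "finite J" and s: "0 < s" "s < 1"
  shows "(\<Sum>z\<in>PiE J (\<lambda>_. UNIV). if lik Q J h z < exp T * lik Q J (\<lambda>_. star) z then lik Q J h z else 0)
         \<le> exp (s * T) * (\<Prod>i\<in>J. chernoff_coeff s (Q (h i)) (Q star))"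
proof -
  let ?g = "\<lambda>i y. pmf (Q (h i)) y powr (1 - s) * pmf (Q star) y powr s"
  have "(\<Sum>z\<in>PiE J (\<lambda>_. UNIV). if lik Q J h z < exp T * lik Q J (\<lambda>_. star) z then lik Q J h z else 0)
       \<le> (\<Sum>z\<in>PiE J (\<lambda>_. UNIV). exp (s * T) * (\<Prod>i\<in>J. ?g i (z i)))"
  proof (rule sum_mono)
    fix z
    define a where "a = lik Q J h z"
    define b where "b = lik Q J (\<lambda>_. star) z"
    have ab: "a \<ge> 0" "b \<ge> 0" unfolding a_def b_def by (rule lik_nonneg)+
    have "(if a < exp T * b then a else 0) \<le> a powr (1 - s) * (exp T * b) powr s"
    proof (cases "a < exp T * b \<and> a > 0")
      case True
      have "a = a powr (1 - s) * a powr s" using True by (simp add: powr_add[symmetric])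
      also have "\<dots> \<le> a powr (1 - s) * (exp T * b) powr s"
        using True s by (intro mult_left_mono powr_mono2) auto
      finally show ?thesis using True by simp
    qed (use ab in auto)
    also have "\<dots> = exp (s * T) * (\<Prod>i\<in>J. ?g i (z i))"
      unfolding a_def b_def lik_def
      by (simp add: powr_mult exp_powr_real prod_powr_distrib prod.distrib mult_ac)
    finally show "(if lik Q J h z < exp T * lik Q J (\<lambda>_. star) z then lik Q J h z else 0) \<le> \<dots>"
      unfolding a_def b_def .
  qed
  also have "\<dots> = exp (s * T) * (\<Prod>i\<in>J. chernoff_coeff s (Q (h i)) (Q star))"
    unfolding chernoff_coeff_def
    by (simp add: sum_distrib_left[symmetric] sum_PiE_UNIV_prod[OF J, of ?g])
  finally show ?thesis .
qed

lemma lik_codeword_below_threshold_le: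
  fixes Q :: "'x \<Rightarrow> 'y::finite pmf" and c :: "nat \<Rightarrow> 'x"
  assumes J: "finite J" "{l..<l+K} \<subseteq> J" and KN: "K \<le> N" and s: "0 < s" "s < 1"
    and letters: "\<And>j. c j = a \<or> c j = star" and preamble: "\<And>j. j < K \<Longrightarrow> c j = a"
    and le1: "chernoff_coeff s (Q a) (Q star) \<le> 1"
  defines "h \<equiv> channel_input star N c l"
  shows "(\<Sum>z\<in>PiE J (\<lambda>_. UNIV). if lik Q J h z < exp T * lik Q J (\<lambda>_. star) z then lik Q J h z else 0)
         \<le> exp (s * T) * chernoff_coeff s (Q a) (Q star) ^ K"
proof -
  let ?c = "\<lambda>i. chernoff_coeff s (Q (h i)) (Q star)"
  have c: "?c i = (if h i = a then chernoff_coeff s (Q a) (Q star) else 1)" for i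
    using letters[of "i - l"] by (auto simp: h_def channel_input_def chernoff_coeff_self)
  have "?c i = chernoff_coeff s (Q a) (Q star)" if "i \<in> {l..<l+K}" for i
    using that preamble[of "i - l"] KN by (auto simp: h_def channel_input_def)
  then have preamble_part: "(\<Prod>i\<in>{l..<l+K}. ?c i) = chernoff_coeff s (Q a) (Q star) ^ K"
    by simp
  have rest: "(\<Prod>i\<in>J - {l..<l+K}. ?c i) \<le> 1"
    using le1 c by (intro prod_le_1) (auto simp: chernoff_coeff_nonneg)
  have "(\<Prod>i\<in>J. ?c i) = (\<Prod>i\<in>J - {l..<l+K}. ?c i) * (\<Prod>i\<in>{l..<l+K}. ?c i)"
    using J by (metis prod.subset_diff)
  also have "\<dots> \<le> 1 * chernoff_coeff s (Q a) (Q star) ^ K"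
    unfolding preamble_part using rest by (intro mult_right_mono) (simp_all add: chernoff_coeff_nonneg)
  finally have "(\<Prod>i\<in>J. ?c i) \<le> chernoff_coeff s (Q a) (Q star) ^ K" by simp
  then show ?thesis
    using lik_below_threshold_le_chernoff[OF J(1) s, of Q h T star]
    by (smt (verit) exp_gt_zero mult_left_mono)
qed

text \<open>If \<open>h\<close> is pure noise on a window \<open>W\<close> and \<open>h'\<close> is pure noise off \<open>W\<close>, then on the event
  the \<open>h\<close>-likelihood is at most \<open>e\<^sup>-\<^sup>T\<close> times the likelihood of the input that follows \<open>h'\<close>
  on \<open>W\<close> and \<open>h\<close> elsewhere (a change of measure).\<close>
lemma lik_ratio_above_threshold_le_exp:
  fixes Q :: "'x \<Rightarrow> 'y::finite pmf"
  assumes J: "finite J" and W: "W \<subseteq> J" and hW: "\<And>i. i \<in> W \<Longrightarrow> h i = star"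
    and h'W: "\<And>i. i \<in> J - W \<Longrightarrow> h' i = star"
  shows "(\<Sum>z\<in>PiE J (\<lambda>_. UNIV).
            if exp T * lik Q J (\<lambda>_. star) z \<le> lik Q J h' z \<and> lik Q J h' z > 0 then lik Q J h z else 0)
         \<le> exp (- T)"
proof -
  define g where "g i = (if i \<in> W then h' i else h i)" for i
  have split: "prod f J = prod f (J - W) * prod f W" for f :: "nat \<Rightarrow> real"
    using J W by (metis prod.subset_diff)
  have "(if exp T * lik Q J (\<lambda>_. star) z \<le> lik Q J h' z \<and> lik Q J h' z > 0 then lik Q J h z else 0)
        \<le> exp (- T) * lik Q J g z" for z
  proof -
    define S where "S = (\<Prod>i\<in>W. pmf (Q star) (z i))"
    define A where "A = (\<Prod>i\<in>W. pmf (Q (h' i)) (z i))"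
    define R where "R = (\<Prod>i\<in>J - W. pmf (Q star) (z i))"
    define U where "U = (\<Prod>i\<in>J - W. pmf (Q (h i)) (z i))"
    have lik: "lik Q J (\<lambda>_. star) z = R * S" "lik Q J h z = U * S" "lik Q J h' z = R * A"
      "lik Q J g z = U * A"
      unfolding lik_def R_def S_def U_def A_def g_def split using hW h'W
      by (auto intro!: arg_cong2[where f = "(*)"] prod.cong)
    have nonneg: "S \<ge> 0" "U \<ge> 0" "R \<ge> 0" "A \<ge> 0"
      unfolding S_def U_def R_def A_def by (simp_all add: prod_nonneg)
    moreover have "U * S \<le> exp (- T) * (U * A)" if "exp T * (R * S) \<le> R * A" "R * A > 0"
    proof -
      have "R > 0" using that(2) nonneg by (simp add: zero_less_mult_iff)
      then have "exp T * S \<le> A" using that(1) by (simp add: mult.left_commute)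
      then have "S \<le> exp (- T) * A" by (simp add: exp_minus field_simps)
      then show ?thesis using nonneg by (simp add: mult_left_mono mult.left_commute)
    qed
    ultimately show ?thesis unfolding lik by simp
  qed
  then have "(\<Sum>z\<in>PiE J (\<lambda>_. UNIV).
      if exp T * lik Q J (\<lambda>_. star) z \<le> lik Q J h' z \<and> lik Q J h' z > 0 then lik Q J h z else 0)
      \<le> (\<Sum>z\<in>PiE J (\<lambda>_. UNIV). exp (- T) * lik Q J g z)"
    by (rule sum_mono)
  also have "\<dots> = exp (- T)" by (simp add: sum_distrib_left[symmetric] sum_lik_eq_1[OF J])
  finally show ?thesis .
qed

section \<open>The maximum-likelihood decoder\<close>

lemma arg_max_on_finite:
  fixes f :: "'a \<Rightarrow> 'b::linorder"
  assumes "finite S" "S \<noteq> {}"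
  shows "arg_max_on f S \<in> S \<and> (\<forall>y\<in>S. f y \<le> f (arg_max_on f S))"
proof -
  have "Max (f ` S) \<in> f ` S" using assms by simp
  then obtain x where "x \<in> S" "f x = Max (f ` S)" by auto
  then have "is_arg_max f (\<lambda>x. x \<in> S) x"
    using assms by (auto simp: is_arg_max_linorder)
  then have "is_arg_max f (\<lambda>x. x \<in> S) (arg_max_on f S)"
    unfolding arg_max_on_def arg_max_def by (rule someI)
  then show ?thesis by (simp add: is_arg_max_linorder)
qed

definition ml_decoder ::
  "('x \<Rightarrow> 'y pmf) \<Rightarrow> 'x \<Rightarrow> nat \<Rightarrow> nat \<Rightarrow> nat \<Rightarrow> (nat \<Rightarrow> nat \<Rightarrow> 'x)
   \<Rightarrow> ((nat \<Rightarrow> 'y) \<Rightarrow> nat) \<times> ((nat \<Rightarrow> 'y) \<Rightarrow> nat)" where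
  "ml_decoder Q star N A M cw =
     (\<lambda>y. A + N,
      \<lambda>y. snd (arg_max_on (\<lambda>(t, m). lik Q {1..<A+N} (channel_input star N (cw m) t) y) ({1..A} \<times> {..<M})))"

lemma ml_decoder_cong:
  assumes "\<And>i. i \<in> {1..<A+N} \<Longrightarrow> y i = y' i"
  shows "snd (ml_decoder Q star N A M cw) y = snd (ml_decoder Q star N A M cw) y'"
proof -
  have "lik Q {1..<A+N} h y = lik Q {1..<A+N} h y'" for h
    using assms by (rule lik_cong)
  then show ?thesis unfolding ml_decoder_def by simp
qed

lemma valid_ml_decoder:
  fixes Q :: "'x \<Rightarrow> 'y pmf"
  shows "valid_decoder (ml_decoder Q star N A M cw)"
  unfolding valid_decoder_def
proof (intro allI impI conjI)
  fix y y' :: "nat \<Rightarrow> 'y"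
  assume agree: "\<forall>i\<in>{1..fst (ml_decoder Q star N A M cw) y}. y i = y' i"
  show "fst (ml_decoder Q star N A M cw) y' = fst (ml_decoder Q star N A M cw) y"
    by (simp add: ml_decoder_def)
  show "snd (ml_decoder Q star N A M cw) y' = snd (ml_decoder Q star N A M cw) y"
    using agree by (intro ml_decoder_cong[symmetric]) (auto simp: ml_decoder_def)
qed

lemma ml_decoder_argmax:
  assumes "A \<ge> 1" "M \<ge> 1"
  obtains t where "t \<in> {1..A}" "snd (ml_decoder Q star N A M cw) y < M"
    "\<And>t' m. t' \<in> {1..A} \<Longrightarrow> m < M \<Longrightarrow>
      lik Q {1..<A+N} (channel_input star N (cw m) t') y
      \<le> lik Q {1..<A+N} (channel_input star N (cw (snd (ml_decoder Q star N A M cw) y)) t) y"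
proof -
  let ?f = "\<lambda>(t, m). lik Q {1..<A+N} (channel_input star N (cw m) t) y"
  let ?p = "arg_max_on ?f ({1..A} \<times> {..<M})"
  have "(1, 0) \<in> {1..A} \<times> {..<M}" using assms by auto
  then have "?p \<in> {1..A} \<times> {..<M} \<and> (\<forall>q\<in>{1..A} \<times> {..<M}. ?f q \<le> ?f ?p)"
    by (intro arg_max_on_finite) auto
  moreover have "snd (ml_decoder Q star N A M cw) y = snd ?p"
    unfolding ml_decoder_def by simp
  ultimately show ?thesis
    using that[of "fst ?p"] by (cases ?p) auto
qed

section \<open>Error analysis\<close>

definition mismatches :: "'x \<Rightarrow> nat \<Rightarrow> (nat \<Rightarrow> 'x) \<Rightarrow> nat \<Rightarrow> (nat \<Rightarrow> 'x) \<Rightarrow> nat \<Rightarrow> nat set" where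
  "mismatches star N c t c' t' = {i. channel_input star N c t i \<noteq> channel_input star N c' t' i}"

definition separated_code :: "'x \<Rightarrow> nat \<Rightarrow> nat \<Rightarrow> nat \<Rightarrow> (nat \<Rightarrow> nat \<Rightarrow> 'x) \<Rightarrow> bool" where
  "separated_code star N d M cw \<longleftrightarrow>
     (\<forall>m<M. \<forall>m'<M. m \<noteq> m' \<longrightarrow>
        (\<forall>t t'. t < t' + N \<longrightarrow> t' < t + N \<longrightarrow> d \<le> card (mismatches star N (cw m) t (cw m') t')))"

lemma lik_codeword_le_other_le_bhattacharyya_power:
  fixes Q :: "'x \<Rightarrow> 'y::finite pmf" and c c' :: "nat \<Rightarrow> 'x"
  assumes J: "finite J" "mismatches star N c t c' t' \<subseteq> J"
    and letters: "\<And>j. c j = a \<or> c j = star" "\<And>j. c' j = a \<or> c' j = star"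
    and d: "d \<le> card (mismatches star N c t c' t')"
  defines "h \<equiv> channel_input star N c t" and "h' \<equiv> channel_input star N c' t'"
  shows "(\<Sum>z\<in>PiE J (\<lambda>_. UNIV). if lik Q J h z \<le> lik Q J h' z then lik Q J h z else 0)
         \<le> bhattacharyya (Q a) (Q star) ^ d"
proof -
  have "{i\<in>J. h i \<noteq> h' i} = mismatches star N c t c' t'"
    using J(2) unfolding h_def h'_def mismatches_def by auto
  then have "bhattacharyya (Q a) (Q star) ^ card {i\<in>J. h i \<noteq> h' i} \<le> bhattacharyya (Q a) (Q star) ^ d"
    using d by (intro power_decreasing) (simp_all add: bhattacharyya_nonneg bhattacharyya_le_1)
  moreover have "h i = a \<or> h i = star" "h' i = a \<or> h' i = star" for i
    using letters unfolding h_def h'_def channel_input_def by auto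
  ultimately show ?thesis
    using lik_le_other_le_bhattacharyya_power[OF J(1), of h a star h' Q] by simp
qed

lemma le_three_way_cover:
  fixes a b :: real and L :: "'p \<Rightarrow> real"
  assumes "finite F" "finite G" "p \<in> F \<union> G" "a \<le> L p" "0 \<le> a"
  shows "a \<le> (if a < b then a else 0) + (\<Sum>q\<in>F. if b \<le> L q \<and> 0 < L q then a else 0)
              + (\<Sum>q\<in>G. if a \<le> L q then a else 0)"
proof -
  have nonneg: "0 \<le> (\<Sum>q\<in>F. if b \<le> L q \<and> 0 < L q then a else 0)"
    "0 \<le> (\<Sum>q\<in>G. if a \<le> L q then a else 0)"
    using assms(5) by (auto intro: sum_nonneg)
  show ?thesis
  proof (cases "a = 0 \<or> a < b")
    case nontrivial: False
    show ?thesis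
    proof (cases "p \<in> F")
      case True
      have "(if b \<le> L p \<and> 0 < L p then a else 0) \<le> (\<Sum>q\<in>F. if b \<le> L q \<and> 0 < L q then a else 0)"
        using True assms by (intro member_le_sum) auto
      moreover have "(if b \<le> L p \<and> 0 < L p then a else 0) = a"
        using nontrivial assms by auto
      ultimately show ?thesis using nonneg nontrivial by simp
    next
      case False
      then have "(if a \<le> L p then a else 0) \<le> (\<Sum>q\<in>G. if a \<le> L q then a else 0)"
        using assms by (intro member_le_sum) auto
      then show ?thesis using nonneg nontrivial assms(4) by simp
    qed
  qed (use nonneg assms in auto)
qed

definition far_hypotheses :: "nat \<Rightarrow> nat \<Rightarrow> nat \<Rightarrow> nat \<Rightarrow> (nat \<times> nat) set" where
  "far_hypotheses A M N l = {p \<in> {1..A} \<times> {..<M}. fst p + N \<le> l \<or> l + N \<le> fst p}"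

definition near_hypotheses :: "nat \<Rightarrow> nat \<Rightarrow> nat \<Rightarrow> nat \<Rightarrow> nat \<Rightarrow> (nat \<times> nat) set" where
  "near_hypotheses A M N l m = {p \<in> {1..A} \<times> {..<M}. snd p \<noteq> m \<and> l < fst p + N \<and> fst p < l + N}"

lemma card_far_hypotheses_le: "real (card (far_hypotheses A M N l)) \<le> real A * real M"
proof -
  have "card (far_hypotheses A M N l) \<le> card ({1..A} \<times> {..<M})"
    unfolding far_hypotheses_def by (intro card_mono) auto
  then show ?thesis by (simp add: card_cartesian_product flip: of_nat_mult)
qed

lemma card_near_hypotheses_le: "real (card (near_hypotheses A M N l m)) \<le> 2 * real N * real M"
proof -
  have "near_hypotheses A M N l m \<subseteq> {(l + 1) - N..<l + N} \<times> {..<M}"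
    unfolding near_hypotheses_def by auto
  then have "card (near_hypotheses A M N l m) \<le> card ({(l + 1) - N..<l + N} \<times> {..<M})"
    by (intro card_mono) auto
  also have "\<dots> \<le> 2 * N * M" by (simp add: card_cartesian_product) linarith
  finally show ?thesis by (metis of_nat_le_iff of_nat_mult of_nat_numeral)
qed

lemma measure_ml_decoder_error:
  fixes Q :: "'x \<Rightarrow> 'y::finite pmf" and A N :: nat
  defines "J \<equiv> {1..<A+N}"
  shows "measure (out_measure Q star N (cw m) l) {y. snd (ml_decoder Q star N A M cw) y \<noteq> m}
    = (\<Sum>z\<in>PiE J (\<lambda>_. UNIV).
         if snd (ml_decoder Q star N A M cw) z \<noteq> m then lik Q J (channel_input star N (cw m) l) z else 0)"
proof -
  let ?E = "{y. snd (ml_decoder Q star N A M cw) y \<noteq> m}"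
  have "finite J" unfolding J_def by simp
  then have "measure (out_measure Q star N (cw m) l) ?E
      = (\<Sum>z\<in>PiE J (\<lambda>_. UNIV) \<inter> ?E. lik Q J (channel_input star N (cw m) l) z)"
    unfolding out_measure_channel_input lik_def
  proof (rule measure_PiM_pmf_finite_dependence)
    fix y y' :: "nat \<Rightarrow> 'y" assume "\<forall>i\<in>J. y i = y' i"
    then show "y \<in> ?E \<longleftrightarrow> y' \<in> ?E"
      using ml_decoder_cong[of A N y y' Q star M cw] unfolding J_def by auto
  qed
  also have "\<dots> = (\<Sum>z\<in>PiE J (\<lambda>_. UNIV).
      if snd (ml_decoder Q star N A M cw) z \<noteq> m then lik Q J (channel_input star N (cw m) l) z else 0)"
    using \<open>finite J\<close> by (simp add: sum.inter_restrict finite_PiE)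
  finally show ?thesis .
qed

text \<open>On an error some wrong hypothesis is at least as likely as the true one. Either the true
  hypothesis is not much more likely than pure noise, or the winner does not overlap the truth
  (and hence beats noise by the same margin), or it overlaps it but carries another message.\<close>
lemma ml_decoder_error_indicator_le:
  fixes Q :: "'x \<Rightarrow> 'y pmf" and star :: 'x and cw :: "nat \<Rightarrow> nat \<Rightarrow> 'x" and N :: nat
  assumes A: "A \<ge> 1" and m: "m < M" and l: "l \<in> {1..A}"
  defines "J \<equiv> {1..<A+N}" and "h \<equiv> channel_input star N (cw m) l"
    and "H \<equiv> \<lambda>p. channel_input star N (cw (snd p)) (fst p)"
  shows "(if snd (ml_decoder Q star N A M cw) z \<noteq> m then lik Q J h z else 0)
    \<le> (if lik Q J h z < exp T * lik Q J (\<lambda>_. star) z then lik Q J h z else 0)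
      + (\<Sum>p\<in>far_hypotheses A M N l.
           if exp T * lik Q J (\<lambda>_. star) z \<le> lik Q J (H p) z \<and> 0 < lik Q J (H p) z then lik Q J h z else 0)
      + (\<Sum>p\<in>near_hypotheses A M N l m. if lik Q J h z \<le> lik Q J (H p) z then lik Q J h z else 0)"
proof (cases "snd (ml_decoder Q star N A M cw) z \<noteq> m")
  case True
  let ?m' = "snd (ml_decoder Q star N A M cw) z"
  obtain t where t: "t \<in> {1..A}" "?m' < M"
    and best: "\<And>t' m'. t' \<in> {1..A} \<Longrightarrow> m' < M \<Longrightarrow> lik Q J (H (t', m')) z \<le> lik Q J (H (t, ?m')) z"
    using ml_decoder_argmax[OF A, of M Q star N cw z] m unfolding H_def J_def by auto
  have "(t, ?m') \<in> far_hypotheses A M N l \<union> near_hypotheses A M N l m"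
    using True t unfolding far_hypotheses_def near_hypotheses_def by auto
  moreover have "lik Q J h z \<le> lik Q J (H (t, ?m')) z"
    using best[OF l m] unfolding h_def H_def by simp
  moreover have "finite (far_hypotheses A M N l)" "finite (near_hypotheses A M N l m)"
    unfolding far_hypotheses_def near_hypotheses_def by auto
  ultimately show ?thesis
    using True le_three_way_cover[where L = "\<lambda>p. lik Q J (H p) z"] by (simp add: lik_nonneg)
qed (auto intro!: add_nonneg_nonneg sum_nonneg simp: lik_nonneg)

lemma ml_decoder_error_le:
  fixes Q :: "'x \<Rightarrow> 'y::finite pmf" and cw :: "nat \<Rightarrow> nat \<Rightarrow> 'x"
  assumes A: "A \<ge> 1" and m: "m < M" and l: "l \<in> {1..A}"
    and letters: "\<And>m j. cw m j = a \<or> cw m j = star"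
    and preamble: "\<And>m j. m < M \<Longrightarrow> j < K \<Longrightarrow> cw m j = a" and KN: "K \<le> N"
    and sep: "separated_code star N d M cw"
    and s: "0 < s" "s < 1" and chernoff_le: "chernoff_coeff s (Q a) (Q star) \<le> 1"
  shows "measure (out_measure Q star N (cw m) l) {y. snd (ml_decoder Q star N A M cw) y \<noteq> m}
    \<le> exp (s * T) * chernoff_coeff s (Q a) (Q star) ^ K + real A * real M * exp (- T)
       + 2 * real N * real M * bhattacharyya (Q a) (Q star) ^ d"
proof -
  define J where "J = {1..<A+N}"
  define Z where "Z = PiE J (\<lambda>_. UNIV :: 'y set)"
  define h where "h = channel_input star N (cw m) l"
  define H where "H p = channel_input star N (cw (snd p)) (fst p)" for p :: "nat \<times> nat"
  let ?L = "lik Q J" and ?far = "far_hypotheses A M N l" and ?near = "near_hypotheses A M N l m"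
  have finJ: "finite J" unfolding J_def by simp
  have "measure (out_measure Q star N (cw m) l) {y. snd (ml_decoder Q star N A M cw) y \<noteq> m}
      \<le> (\<Sum>z\<in>Z. (if ?L h z < exp T * ?L (\<lambda>_. star) z then ?L h z else 0)
        + (\<Sum>p\<in>?far. if exp T * ?L (\<lambda>_. star) z \<le> ?L (H p) z \<and> 0 < ?L (H p) z then ?L h z else 0)
        + (\<Sum>p\<in>?near. if ?L h z \<le> ?L (H p) z then ?L h z else 0))"
    unfolding measure_ml_decoder_error Z_def J_def h_def H_def
    by (intro sum_mono ml_decoder_error_indicator_le[OF A m l])
  also have "\<dots> = (\<Sum>z\<in>Z. if ?L h z < exp T * ?L (\<lambda>_. star) z then ?L h z else 0)
      + (\<Sum>p\<in>?far. \<Sum>z\<in>Z. if exp T * ?L (\<lambda>_. star) z \<le> ?L (H p) z \<and> 0 < ?L (H p) z then ?L h z else 0)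
      + (\<Sum>p\<in>?near. \<Sum>z\<in>Z. if ?L h z \<le> ?L (H p) z then ?L h z else 0)"
    by (simp add: sum.distrib sum.swap[of _ Z])
  also have "\<dots> \<le> exp (s * T) * chernoff_coeff s (Q a) (Q star) ^ K
      + (\<Sum>p\<in>?far. exp (- T)) + (\<Sum>p\<in>?near. bhattacharyya (Q a) (Q star) ^ d)"
  proof (intro add_mono sum_mono)
    show "(\<Sum>z\<in>Z. if ?L h z < exp T * ?L (\<lambda>_. star) z then ?L h z else 0)
        \<le> exp (s * T) * chernoff_coeff s (Q a) (Q star) ^ K"
      unfolding Z_def h_def using finJ l KN
      by (intro lik_codeword_below_threshold_le s letters preamble[OF m] chernoff_le) (auto simp: J_def)
  next
    fix p assume "p \<in> ?far"
    then have p: "fst p \<in> {1..A}" "fst p + N \<le> l \<or> l + N \<le> fst p" unfolding far_hypotheses_def by auto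
    show "(\<Sum>z\<in>Z. if exp T * ?L (\<lambda>_. star) z \<le> ?L (H p) z \<and> 0 < ?L (H p) z then ?L h z else 0)
        \<le> exp (- T)"
      unfolding Z_def
      by (rule lik_ratio_above_threshold_le_exp[OF finJ, of "{fst p..<fst p + N}"])
        (use p in \<open>auto simp: J_def h_def H_def channel_input_def\<close>)
  next
    fix p assume "p \<in> ?near"
    then have p: "fst p \<in> {1..A}" "snd p < M" "snd p \<noteq> m" "l < fst p + N" "fst p < l + N"
      unfolding near_hypotheses_def by auto
    show "(\<Sum>z\<in>Z. if ?L h z \<le> ?L (H p) z then ?L h z else 0) \<le> bhattacharyya (Q a) (Q star) ^ d"
      unfolding Z_def h_def H_def using finJ sep m p
    proof (intro lik_codeword_le_other_le_bhattacharyya_power letters)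
      show "mismatches star N (cw m) l (cw (snd p)) (fst p) \<subseteq> J"
        using p(1) l unfolding J_def mismatches_def channel_input_def by auto
    qed (auto simp: separated_code_def)
  qed
  also have "\<dots> \<le> exp (s * T) * chernoff_coeff s (Q a) (Q star) ^ K + real A * real M * exp (- T)
       + 2 * real N * real M * bhattacharyya (Q a) (Q star) ^ d"
    using card_far_hypotheses_le[of A M N l] card_near_hypotheses_le[of A M N l m]
    by (intro add_mono) (simp_all add: mult_right_mono bhattacharyya_nonneg)
  finally show ?thesis .
qed

lemma error_prob_ml_decoder_le:
  fixes Q :: "'x \<Rightarrow> 'y::finite pmf" and cw :: "nat \<Rightarrow> nat \<Rightarrow> 'x"
  assumes A: "A \<ge> 1" and M: "M \<ge> 1"
    and letters: "\<And>m j. cw m j = a \<or> cw m j = star"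
    and preamble: "\<And>m j. m < M \<Longrightarrow> j < K \<Longrightarrow> cw m j = a" and KN: "K \<le> N"
    and sep: "separated_code star N d M cw"
    and s: "0 < s" "s < 1" and chernoff_le: "chernoff_coeff s (Q a) (Q star) \<le> 1"
  shows "error_prob Q star N M cw (ml_decoder Q star N A M cw) A
    \<le> exp (s * T) * chernoff_coeff s (Q a) (Q star) ^ K + real A * real M * exp (- T)
       + 2 * real N * real M * bhattacharyya (Q a) (Q star) ^ d"
    (is "_ \<le> ?B")
proof -
  have "error_prob Q star N M cw (ml_decoder Q star N A M cw) A
      \<le> (1 / (real A * real M)) * (\<Sum>m<M. \<Sum>l\<in>{1..A}. ?B)"
    unfolding error_prob_def
    by (intro mult_left_mono sum_mono ml_decoder_error_le[OF A _ _ letters preamble KN sep s chernoff_le]) auto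
  also have "\<dots> = ?B" using A M by simp
  finally show ?thesis .
qed

section \<open>Codebooks with a common preamble\<close>

definition preamble_word :: "'x \<Rightarrow> 'x \<Rightarrow> nat \<Rightarrow> nat set \<Rightarrow> nat \<Rightarrow> 'x" where
  "preamble_word a star K S j = (if j < K \<or> j - K \<in> S then a else star)"

lemma finite_mismatches: "finite (mismatches star N c t c' t')"
  by (rule finite_subset[of _ "{..<t+N} \<union> {..<t'+N}"]) (auto simp: mismatches_def channel_input_def)

lemma mismatches_commute: "mismatches star N c t c' t' = mismatches star N c' t' c t"
  unfolding mismatches_def by auto

lemma card_mismatches_shift:
  "card (mismatches star N c (t + k) c' (t' + k)) = card (mismatches star N c t c' t')"
proof -
  have "mismatches star N c (t + k) c' (t' + k) = (\<lambda>i. i + k) ` mismatches star N c t c' t'"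
  proof (intro set_eqI iffI)
    fix i assume "i \<in> mismatches star N c (t + k) c' (t' + k)"
    then have "k \<le> i" "i - k \<in> mismatches star N c t c' t'"
      unfolding mismatches_def channel_input_def by (auto split: if_splits simp: algebra_simps)
    then show "i \<in> (\<lambda>i. i + k) ` mismatches star N c t c' t'"
      by (intro image_eqI[of _ _ "i - k"]) auto
  qed (auto simp: mismatches_def channel_input_def split: if_splits)
  then show ?thesis by (simp add: card_image)
qed

text \<open>Normalising the first start time to \<open>N\<close> keeps every overlapping offset in
  \<open>{1..<2*N}\<close>, clear of truncated subtraction.\<close>
lemma card_mismatches_normalize:
  assumes "t < t' + N"
  shows "card (mismatches star N c t c' t') = card (mismatches star N c N c' (N + t' - t))"
proof -
  have "card (mismatches star N c t c' t') = card (mismatches star N c (t + N) c' (t' + N))"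
    by (rule card_mismatches_shift[symmetric])
  also have "\<dots> = card (mismatches star N c (N + t) c' ((N + t' - t) + t))"
    using assms by (simp add: add.commute)
  also have "\<dots> = card (mismatches star N c N c' (N + t' - t))"
    by (rule card_mismatches_shift)
  finally show ?thesis .
qed

text \<open>Counting subsets at Hamming distance less than \<open>d\<close> from \<open>W\<close> via
  \<open>#{U. |U| < d} \<le> \<Sum>\<^sub>U 2\<^sup>d\<^sup>-\<^sup>|\<^sup>U\<^sup>| = 2\<^sup>d (3/2)\<^sup>n\<close>.\<close>
lemma card_hamming_ball_le:
  fixes W :: "nat set" assumes W: "W \<subseteq> {..<n}"
  shows "real (card {S\<in>Pow {..<n}. card (S - W \<union> (W - S)) < d}) \<le> 2 ^ d * (3/2) ^ n"
proof -
  let ?A = "{..<n}"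
  let ?f = "\<lambda>U. U - W \<union> (W - U)"
  have "{S\<in>Pow ?A. card (?f S) < d} \<subseteq> ?f ` {U\<in>Pow ?A. card U < d}"
  proof
    fix S assume S: "S \<in> {S\<in>Pow ?A. card (?f S) < d}"
    have "S = ?f (?f S)" by auto
    moreover have "?f S \<in> {U\<in>Pow ?A. card U < d}" using S W by auto
    ultimately show "S \<in> ?f ` {U\<in>Pow ?A. card U < d}" by blast
  qed
  then have "card {S\<in>Pow ?A. card (?f S) < d} \<le> card (?f ` {U\<in>Pow ?A. card U < d})"
    by (intro card_mono) auto
  also have "\<dots> \<le> card {U\<in>Pow ?A. card U < d}" by (rule card_image_le) auto
  finally have "real (card {S\<in>Pow ?A. card (?f S) < d}) \<le> real (card {U\<in>Pow ?A. card U < d})"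
    by simp
  also have "\<dots> = (\<Sum>U\<in>Pow ?A. if card U < d then 1 else 0)"
    by (simp add: sum.If_cases Int_def)
  also have "\<dots> \<le> (\<Sum>U\<in>Pow ?A. 2 ^ d * ((\<Prod>x\<in>U. 1/2) * (\<Prod>x\<in>?A - U. 1)))"
  proof (rule sum_mono)
    fix U assume "U \<in> Pow ?A"
    have "(1::real) \<le> 2 ^ d * (1/2) ^ card U" if "card U < d"
    proof -
      have "(2::real) ^ card U \<le> 2 ^ d" using that by (intro power_increasing) auto
      then show ?thesis by (simp add: field_simps power_divide)
    qed
    then show "(if card U < d then 1 else 0) \<le> 2 ^ d * ((\<Prod>x\<in>U. 1/2) * (\<Prod>x\<in>?A - U. 1::real))"
      by auto
  qed
  also have "\<dots> = 2 ^ d * (\<Prod>x\<in>?A. 1/2 + 1)"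
    by (subst prod_add) (simp_all add: sum_distrib_left del: prod_constant)
  also have "\<dots> = 2 ^ d * (3/2) ^ n" by simp
  finally show ?thesis .
qed

text \<open>The data part of the normalised word occupies positions \<open>N + K + j\<close>, \<open>j < n\<close>.\<close>
lemma card_data_mismatches_le:
  fixes c' :: "nat \<Rightarrow> 'x" and t' :: nat
  assumes a: "a \<noteq> star" and N: "N = K + n" and S: "S \<subseteq> {..<n}"
    and c': "\<And>j. c' j = a \<or> c' j = star"
  defines "W \<equiv> {j\<in>{..<n}. channel_input star N c' t' (N + K + j) = a}"
  shows "card (S - W \<union> (W - S)) \<le> card (mismatches star N (preamble_word a star K S) N c' t')"
proof (rule card_inj_on_le[where f="\<lambda>j. N + K + j"])
  show "(\<lambda>j. N + K + j) ` (S - W \<union> (W - S)) \<subseteq> mismatches star N (preamble_word a star K S) N c' t'"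
  proof
    fix i assume "i \<in> (\<lambda>j. N + K + j) ` (S - W \<union> (W - S))"
    then obtain j where j: "i = N + K + j" "j < n" "(j \<in> S) \<noteq> (channel_input star N c' t' i = a)"
      using S unfolding W_def by auto
    have "channel_input star N (preamble_word a star K S) N i = (if j \<in> S then a else star)"
      using j N unfolding channel_input_def preamble_word_def by auto
    moreover have "channel_input star N c' t' i = a \<or> channel_input star N c' t' i = star"
      using c' unfolding channel_input_def by auto
    ultimately show "i \<in> mismatches star N (preamble_word a star K S) N c' t'"
      using j a unfolding mismatches_def by auto
  qed
qed (auto simp: inj_on_def finite_mismatches)

text \<open>Gilbert--Varshamov step: the words within distance \<open>d\<close> of one of the \<open>k\<close> given codewords
  at one of the \<open>2N - 1\<close> overlapping offsets do not exhaust all \<open>2\<^sup>n\<close> data patterns.\<close>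
lemma exists_word_separated_from:
  assumes a: "a \<noteq> star" and N: "N = K + n"
    and count: "real k * (2 * real N) * 2 ^ d * (3/2) ^ n < 2 ^ n"
  shows "\<exists>S\<subseteq>{..<n}. \<forall>b<k. \<forall>t'\<in>{1..<2*N}.
           d \<le> card (mismatches star N (preamble_word a star K S) N (preamble_word a star K (D b)) t')"
proof -
  define W where "W b t' = {j\<in>{..<n}. channel_input star N (preamble_word a star K (D b)) t' (N + K + j) = a}"
    for b t'
  define Bad where "Bad = (\<Union>b<k. \<Union>t'\<in>{1..<2*N}. {S\<in>Pow {..<n}. card (S - W b t' \<union> (W b t' - S)) < d})"
  have "card Bad \<le> (\<Sum>b<k. \<Sum>t'\<in>{1..<2*N}. card {S\<in>Pow {..<n}. card (S - W b t' \<union> (W b t' - S)) < d})"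
    unfolding Bad_def by (rule order.trans[OF card_UN_le]) (auto intro!: sum_mono card_UN_le)
  then have "real (card Bad)
      \<le> (\<Sum>b<k. \<Sum>t'\<in>{1..<2*N}. real (card {S\<in>Pow {..<n}. card (S - W b t' \<union> (W b t' - S)) < d}))"
    by (simp only: of_nat_sum[symmetric] of_nat_le_iff)
  also have "\<dots> \<le> (\<Sum>b<k. \<Sum>t'\<in>{1..<2*N}. 2 ^ d * (3/2) ^ n)"
    by (intro sum_mono card_hamming_ball_le) (auto simp: W_def)
  also have "\<dots> = real k * real (2 * N - 1) * 2 ^ d * (3/2) ^ n" by simp
  also have "\<dots> \<le> real k * (2 * real N) * 2 ^ d * (3/2) ^ n"
    by (intro mult_right_mono mult_left_mono) auto
  also have "\<dots> < real (card (Pow {..<n::nat}))" using count by (simp add: card_Pow)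
  finally have "card Bad < card (Pow {..<n::nat})" by linarith
  moreover have "finite Bad" unfolding Bad_def by auto
  ultimately have "\<not> Pow {..<n} \<subseteq> Bad" using card_mono by (metis leD)
  then obtain S where S: "S \<subseteq> {..<n}" "S \<notin> Bad" by blast
  have "d \<le> card (mismatches star N (preamble_word a star K S) N (preamble_word a star K (D b)) t')"
    if "b < k" "t' \<in> {1..<2*N}" for b t'
  proof -
    have "card (S - W b t' \<union> (W b t' - S))
        \<le> card (mismatches star N (preamble_word a star K S) N (preamble_word a star K (D b)) t')"
      unfolding W_def using a N S(1) by (intro card_data_mismatches_le) (auto simp: preamble_word_def)
    moreover have "\<not> card (S - W b t' \<union> (W b t' - S)) < d" using S that unfolding Bad_def by auto
    ultimately show ?thesis by linarith
  qed
  with S(1) show ?thesis by blast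
qed

lemma separated_code_extend:
  assumes sep: "separated_code star N d k c"
    and new: "\<And>b t'. b < k \<Longrightarrow> t' \<in> {1..<2*N} \<Longrightarrow> d \<le> card (mismatches star N w N (c b) t')"
  shows "separated_code star N d (Suc k) (c(k := w))"
  unfolding separated_code_def
proof (intro allI impI)
  have new': "d \<le> card (mismatches star N w t (c b) t')" if "b < k" "t < t' + N" "t' < t + N" for b t t'
  proof -
    have "N + t' - t \<in> {1..<2*N}" using that by auto
    then show ?thesis using card_mismatches_normalize[OF that(2), of star w "c b"] new[OF that(1)] by simp
  qed
  fix m m' t t' assume "m < Suc k" "m' < Suc k" "m \<noteq> m'" and overlap: "t < t' + N" "t' < t + N"
  then consider "m = k" "m' < k" | "m' = k" "m < k" | "m < k" "m' < k" by linarith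
  then show "d \<le> card (mismatches star N ((c(k := w)) m) t ((c(k := w)) m') t')"
  proof cases
    case 1 then show ?thesis using new' overlap by simp
  next
    case 2 then show ?thesis using new'[of m t' t] overlap by (simp add: mismatches_commute)
  next
    case 3 then show ?thesis using sep \<open>m \<noteq> m'\<close> overlap unfolding separated_code_def by simp
  qed
qed

lemma exists_separated_preamble_code:
  assumes a: "a \<noteq> star" and N: "N = K + n"
    and count: "real M * (2 * real N) * 2 ^ d * (3/2) ^ n < 2 ^ n"
  shows "\<exists>D. separated_code star N d M (\<lambda>m. preamble_word a star K (D m))"
proof -
  have "\<exists>D. separated_code star N d k (\<lambda>m. preamble_word a star K (D m))" if "k \<le> M" for k
    using that
  proof (induction k)
    case 0
    show ?case by (simp add: separated_code_def)
  next
    case (Suc k)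
    then obtain D where D: "separated_code star N d k (\<lambda>m. preamble_word a star K (D m))" by auto
    have "real k * (2 * real N) * 2 ^ d * (3/2) ^ n \<le> real M * (2 * real N) * 2 ^ d * (3/2) ^ n"
      using Suc.prems by (intro mult_right_mono) auto
    then obtain S where "\<forall>b<k. \<forall>t'\<in>{1..<2*N}.
        d \<le> card (mismatches star N (preamble_word a star K S) N (preamble_word a star K (D b)) t')"
      using exists_word_separated_from[OF a N, of k d D] count by auto
    then have "separated_code star N d (Suc k)
        ((\<lambda>m. preamble_word a star K (D m))(k := preamble_word a star K S))"
      by (intro separated_code_extend[OF D]) auto
    moreover have "(\<lambda>m. preamble_word a star K (D m))(k := preamble_word a star K S)
        = (\<lambda>m. preamble_word a star K ((D(k := S)) m))" by auto
    ultimately show ?case by metis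
  qed
  then show ?thesis by blast
qed

section \<open>Asymptotics\<close>

lemma real_nat_div_bounds:
  assumes "k > 0"
  shows "real (N div k) \<le> real N / real k" and "real N / real k - 1 \<le> real (N div k)"
proof -
  have e: "real N = real k * real (N div k) + real (N mod k)"
    by (metis div_mult_mod_eq mult.commute of_nat_add of_nat_mult)
  have "real (N mod k) < real k" using assms by simp
  with e assms show "real (N div k) \<le> real N / real k" "real N / real k - 1 \<le> real (N div k)"
    by (simp_all add: field_simps)
qed

lemma power_le_exp_if_le_one:
  fixes x :: real
  assumes "0 < x" "x \<le> 1" "c \<le> real n"
  shows "x ^ n \<le> exp (c * ln x)"
proof -
  have "x ^ n = exp (real n * ln x)" using assms by (simp add: exp_of_nat_mult)
  also have "\<dots> \<le> exp (c * ln x)" using assms by (intro exp_mono mult_right_mono_neg) auto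
  finally show ?thesis .
qed

lemma power_le_exp_if_ge_one:
  fixes x :: real
  assumes "1 \<le> x" "real n \<le> c"
  shows "x ^ n \<le> exp (c * ln x)"
proof -
  have "x ^ n = exp (real n * ln x)" using assms by (simp add: exp_of_nat_mult)
  also have "\<dots> \<le> exp (c * ln x)" using assms by (intro exp_mono mult_right_mono) auto
  finally show ?thesis .
qed

lemma tendsto_nat_div_over:
  assumes "k > 0"
  shows "(\<lambda>N. real (N div k + 1) / real N) \<longlonglongrightarrow> 1 / real k"
proof (rule tendsto_sandwich[where f="\<lambda>N. 1 / real k - 1 / real N" and h="\<lambda>N. 1 / real k + 1 / real N"])
  have bounds: "1 / real k - 1 / real N \<le> real (N div k + 1) / real N \<and>
      real (N div k + 1) / real N \<le> 1 / real k + 1 / real N" if "N > 0" for N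
  proof -
    have lower: "real N / real k \<le> real (N div k + 1)" and upper: "real (N div k + 1) \<le> real N / real k + 1"
      using real_nat_div_bounds[OF assms, of N] by simp_all
    have "(real N / real k) / real N \<le> real (N div k + 1) / real N"
      using lower by (intro divide_right_mono) auto
    moreover have "real (N div k + 1) / real N \<le> (real N / real k + 1) / real N"
      using upper by (intro divide_right_mono) auto
    moreover have "(real N / real k) / real N = 1 / real k"
      and "(real N / real k + 1) / real N = 1 / real k + 1 / real N"
      using that by (simp_all add: add_divide_distrib)
    moreover have "0 \<le> 1 / real N" by simp
    ultimately show ?thesis by (smt (verit))
  qed
  have "\<forall>\<^sub>F N in sequentially. 1 / real k - 1 / real N \<le> real (N div k + 1) / real N \<and>
      real (N div k + 1) / real N \<le> 1 / real k + 1 / real N"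
    using eventually_gt_at_top[of "0::nat"] by eventually_elim (rule bounds)
  then show "\<forall>\<^sub>F N in sequentially. 1 / real k - 1 / real N \<le> real (N div k + 1) / real N"
    "\<forall>\<^sub>F N in sequentially. real (N div k + 1) / real N \<le> 1 / real k + 1 / real N"
    by (auto elim: eventually_mono)
  show "(\<lambda>N. 1 / real k - 1 / real N) \<longlonglongrightarrow> 1 / real k"
    "(\<lambda>N. 1 / real k + 1 / real N) \<longlonglongrightarrow> 1 / real k"
    by (auto intro!: tendsto_eq_intros lim_const_over_n)
qed

lemma tendsto_exp_linear_neg: "c < 0 \<Longrightarrow> (\<lambda>N. exp (c * real N)) \<longlonglongrightarrow> 0"
  by real_asymp

lemma tendsto_mult_exp_linear_neg: "c < 0 \<Longrightarrow> (\<lambda>N. real N * exp (c * real N)) \<longlonglongrightarrow> 0"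
  by real_asymp

section \<open>The coding scheme\<close>

lemma async_level_bounds:
  assumes "\<alpha> \<le> \<alpha>'" "0 \<le> \<alpha>'" "0 < \<epsilon>"
  shows "1 \<le> async_level \<alpha> \<epsilon> N" "real (async_level \<alpha> \<epsilon> N) \<le> 2 * exp (\<alpha>' * real N)"
proof -
  let ?e = "exp ((\<alpha> - \<epsilon>) * real N)"
  have "0 < \<lceil>?e\<rceil>" by simp
  then show "1 \<le> async_level \<alpha> \<epsilon> N" unfolding async_level_def by linarith
  have "?e \<le> exp (\<alpha>' * real N)" using assms by (intro exp_mono mult_right_mono) auto
  moreover have "1 \<le> exp (\<alpha>' * real N)" using assms by simp
  moreover have "real (async_level \<alpha> \<epsilon> N) \<le> ?e + 1"
    unfolding async_level_def using of_int_ceiling_le_add_one[of ?e] by simp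
  ultimately show "real (async_level \<alpha> \<epsilon> N) \<le> 2 * exp (\<alpha>' * real N)" by linarith
qed

text \<open>\<open>\<beta>\<close> is the preamble fraction, \<open>ln 2 / k\<close> the rate, \<open>1 / j\<close> the relative minimum
  distance, \<open>s\<close> and \<open>\<theta>\<close> the Chernoff parameters of the preamble test, and \<open>b\<close> bounds the
  Bhattacharyya coefficient. The three rate conditions make the three error terms and the
  Gilbert--Varshamov count decay exponentially.\<close>
locale preamble_scheme =
  fixes Q :: "'x \<Rightarrow> 'y::finite pmf" and star a :: 'x
    and \<alpha> \<theta> s b \<beta> :: real and j k :: nat
  assumes a_neq_star: "a \<noteq> star"
    and s: "0 < s" "s < 1"
    and chernoff: "chernoff_coeff s (Q a) (Q star) * exp (s * \<theta>) < 1"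
    and bhattacharyya_le: "bhattacharyya (Q a) (Q star) \<le> b" and b: "0 < b" "b < 1"
    and \<alpha>: "0 \<le> \<alpha>" and \<beta>: "0 < \<beta>" "\<beta> < 1" and jk: "0 < j" "0 < k"
    and false_alarm_rate: "\<alpha> + ln 2 / k < \<beta> * \<theta>"
    and confusion_rate: "ln 2 / k + ln b / j < 0"
    and packing_rate: "ln 2 / k + ln 2 / j < (1 - \<beta>) * ln (4/3)"
begin

definition preamble_length :: "nat \<Rightarrow> nat" where
  "preamble_length N = nat \<lceil>\<beta> * real N\<rceil>"

definition data_length :: "nat \<Rightarrow> nat" where
  "data_length N = N - preamble_length N"

definition min_distance :: "nat \<Rightarrow> nat" where
  "min_distance N = N div j"

definition messages :: "nat \<Rightarrow> nat" where
  "messages N = 2 ^ (N div k + 1)"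

definition data_sets :: "nat \<Rightarrow> nat \<Rightarrow> nat set" where
  "data_sets N = (SOME D. separated_code star N (min_distance N) (messages N)
                            (\<lambda>m. preamble_word a star (preamble_length N) (D m)))"

definition code :: "nat \<Rightarrow> nat \<Rightarrow> nat \<Rightarrow> 'x" where
  "code N m = preamble_word a star (preamble_length N) (data_sets N m)"

definition decoder :: "nat \<Rightarrow> nat \<Rightarrow> ((nat \<Rightarrow> 'y) \<Rightarrow> nat) \<times> ((nat \<Rightarrow> 'y) \<Rightarrow> nat)" where
  "decoder N A = ml_decoder Q star N A (messages N) (code N)"

definition gv_condition :: "nat \<Rightarrow> bool" where
  "gv_condition N \<longleftrightarrow>
     real (messages N) * (2 * real N) * 2 ^ min_distance N * (3/2) ^ data_length N < 2 ^ data_length N"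

definition error_bound :: "nat \<Rightarrow> real" where
  "error_bound N = (chernoff_coeff s (Q a) (Q star) * exp (s * \<theta>)) ^ preamble_length N
     + 4 * exp ((\<alpha> + ln 2 / k - \<beta> * \<theta>) * real N)
     + 4 / b * (real N * exp ((ln 2 / k + ln b / j) * real N))"

lemma \<theta>_pos: "\<theta> > 0"
  using false_alarm_rate \<alpha> \<beta> jk
  by (smt (verit, best) divide_pos_pos ln_gt_zero of_nat_0_less_iff zero_less_mult_iff)

lemma preamble_length_bounds: "\<beta> * real N \<le> real (preamble_length N)" "preamble_length N \<le> N"
proof -
  show "\<beta> * real N \<le> real (preamble_length N)"
    unfolding preamble_length_def using \<beta> by (simp add: le_of_int_ceiling)
  have "\<beta> * real N \<le> real N" using \<beta> by (simp add: mult_left_le_one_le)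
  then show "preamble_length N \<le> N"
    unfolding preamble_length_def by (simp add: ceiling_le_iff nat_le_iff)
qed

lemma data_length_ge: "(1 - \<beta>) * real N - 1 \<le> real (data_length N)"
proof -
  have "real (preamble_length N) \<le> \<beta> * real N + 1"
    unfolding preamble_length_def using \<beta> of_int_ceiling_le_add_one[of "\<beta> * real N"] by simp
  then show ?thesis unfolding data_length_def using preamble_length_bounds(2)[of N]
    by (simp add: algebra_simps)
qed

lemma messages_ge_2: "messages N \<ge> 2"
  unfolding messages_def using power_increasing[of 1 "N div k + 1" "2::nat"] by simp

lemma messages_le: "real (messages N) \<le> 2 * exp (real N / real k * ln 2)"
  unfolding messages_def
  using power_le_exp_if_ge_one[of 2 "N div k" "real N / real k"] real_nat_div_bounds(1)[OF jk(2)] by simp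

lemma rate: "(\<lambda>N. ln (real (messages N)) / real N) \<longlonglongrightarrow> ln 2 / real k"
proof -
  have "ln (real (messages N)) = real (N div k + 1) * ln 2" for N
    unfolding messages_def of_nat_power of_nat_numeral by (rule ln_realpow)
  then have "(\<lambda>N. ln (real (messages N)) / real N) = (\<lambda>N. real (N div k + 1) / real N * ln 2)"
    by simp
  moreover have "(\<lambda>N. real (N div k + 1) / real N * ln 2) \<longlonglongrightarrow> 1 / real k * ln 2"
    using jk by (intro tendsto_mult tendsto_nat_div_over tendsto_const)
  ultimately show ?thesis by simp
qed

lemma eventually_gv_condition: "eventually gv_condition sequentially"
proof -
  define \<kappa> where "\<kappa> = ln 2 / k + ln 2 / j - (1 - \<beta>) * ln (4/3)"
  have bound: "real (messages N) * (2 * real N) * 2 ^ min_distance N * (3/4) ^ data_length N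
      \<le> 16/3 * (real N * exp (\<kappa> * real N))" for N
  proof -
    have "(3/4::real) ^ data_length N \<le> exp (((1 - \<beta>) * real N - 1) * ln (3/4))"
      using data_length_ge by (intro power_le_exp_if_le_one) auto
    also have "((1 - \<beta>) * real N - 1) * ln (3/4) = - ((1 - \<beta>) * ln (4/3)) * real N + ln (4/3)"
      using ln_inverse[of "4/3"] by (simp add: algebra_simps)
    also have "exp (- ((1 - \<beta>) * ln (4/3)) * real N + ln (4/3)) = 4/3 * exp (- ((1 - \<beta>) * ln (4/3)) * real N)"
      by (simp only: exp_add exp_ln_iff) simp
    finally have "real (messages N) * (2 * real N) * 2 ^ min_distance N * (3/4) ^ data_length N
      \<le> (2 * exp (real N / real k * ln 2)) * (2 * real N) * exp (real N / real j * ln 2)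
         * (4/3 * exp (- ((1 - \<beta>) * ln (4/3)) * real N))"
      using messages_le power_le_exp_if_ge_one[of 2 "N div j" "real N / real j"] real_nat_div_bounds(1)[OF jk(1)]
      unfolding min_distance_def
      by (intro mult_mono) auto
    also have "\<dots> = 16/3 * (real N * exp (\<kappa> * real N))"
      unfolding \<kappa>_def by (simp add: exp_add[symmetric] algebra_simps)
    finally show ?thesis .
  qed
  have "\<kappa> < 0" unfolding \<kappa>_def using packing_rate by simp
  then have "(\<lambda>N. 16/3 * (real N * exp (\<kappa> * real N))) \<longlonglongrightarrow> 16/3 * 0"
    by (intro tendsto_mult tendsto_const tendsto_mult_exp_linear_neg)
  from order_tendstoD(2)[OF this, of 1]
  have "eventually (\<lambda>N. 16/3 * (real N * exp (\<kappa> * real N)) < 1) sequentially" by simp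
  then show ?thesis
  proof eventually_elim
    case (elim N)
    then have "real (messages N) * (2 * real N) * 2 ^ min_distance N * (3/4) ^ data_length N < 1"
      using bound[of N] by linarith
    then have "real (messages N) * (2 * real N) * 2 ^ min_distance N * (3/4) ^ data_length N * 2 ^ data_length N
        < 1 * 2 ^ data_length N"
      by (intro mult_strict_right_mono) auto
    then show ?case unfolding gv_condition_def by (simp add: mult.assoc flip: power_mult_distrib)
  qed
qed

lemma code_letters: "code N m i = a \<or> code N m i = star"
  unfolding code_def preamble_word_def by auto

lemma code_preamble: "i < preamble_length N \<Longrightarrow> code N m i = a"
  unfolding code_def preamble_word_def by auto

lemma code_separated:
  assumes "gv_condition N"
  shows "separated_code star N (min_distance N) (messages N) (code N)"
proof -
  have "N = preamble_length N + data_length N"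
    unfolding data_length_def using preamble_length_bounds(2)[of N] by simp
  from exists_separated_preamble_code[OF a_neq_star this assms[unfolded gv_condition_def]]
  show ?thesis unfolding code_def data_sets_def by (rule someI_ex)
qed

lemma error_prob_le_error_bound:
  assumes gv: "gv_condition N" and A: "A \<ge> 1" "real A \<le> 2 * exp (\<alpha> * real N)"
  shows "error_prob Q star N (messages N) (code N) (decoder N A) A \<le> error_bound N"
proof -
  let ?K = "preamble_length N" and ?c = "chernoff_coeff s (Q a) (Q star)"
    and ?B = "bhattacharyya (Q a) (Q star)"
  have c: "0 \<le> ?c" "?c \<le> 1"
    using chernoff chernoff_coeff_nonneg \<theta>_pos s
    by (smt (verit) mult_le_cancel_left1 one_le_exp_iff zero_le_mult_iff)+
  have "?B ^ min_distance N \<le> exp ((real N / real j - 1) * ln b)"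
    using power_mono[OF bhattacharyya_le bhattacharyya_nonneg]
      power_le_exp_if_le_one[of b "real N / real j - 1" "N div j"] real_nat_div_bounds(2)[OF jk(1)] b
    unfolding min_distance_def by (meson less_imp_le order.trans)
  also have "\<dots> = exp (real N / real j * ln b) / b"
    using b by (simp add: algebra_simps exp_diff)
  finally have B: "?B ^ min_distance N \<le> exp (real N / real j * ln b) / b" .
  have "error_prob Q star N (messages N) (code N) (decoder N A) A
      \<le> exp (s * (\<theta> * ?K)) * ?c ^ ?K + real A * real (messages N) * exp (- (\<theta> * ?K))
        + 2 * real N * real (messages N) * ?B ^ min_distance N"
    unfolding decoder_def using A messages_ge_2[of N] s c
    by (intro error_prob_ml_decoder_le[where a = a] code_letters code_preamble
        code_separated[OF gv] preamble_length_bounds) auto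
  also have "exp (s * (\<theta> * ?K)) * ?c ^ ?K = (?c * exp (s * \<theta>)) ^ ?K"
    by (simp add: power_mult_distrib mult_ac flip: exp_of_nat_mult)
  also have "real A * real (messages N) * exp (- (\<theta> * ?K))
      \<le> (2 * exp (\<alpha> * real N)) * (2 * exp (real N / real k * ln 2)) * exp (- (\<theta> * (\<beta> * real N)))"
    using A messages_le[of N] preamble_length_bounds(1)[of N] \<theta>_pos by (intro mult_mono) auto
  also have "\<dots> = 4 * exp ((\<alpha> + ln 2 / k - \<beta> * \<theta>) * real N)"
    by (simp add: exp_add[symmetric] algebra_simps)
  also have "2 * real N * real (messages N) * ?B ^ min_distance N
      \<le> 2 * real N * (2 * exp (real N / real k * ln 2)) * (exp (real N / real j * ln b) / b)"
    using messages_le[of N] bhattacharyya_nonneg B by (intro mult_mono zero_le_power) auto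
  also have "\<dots> = 4 / b * (real N * exp ((ln 2 / k + ln b / j) * real N))"
    by (simp add: exp_add[symmetric] algebra_simps)
  finally show ?thesis unfolding error_bound_def by simp
qed

lemma error_bound_tendsto_0: "error_bound \<longlonglongrightarrow> 0"
proof -
  have "filterlim preamble_length at_top sequentially"
  proof (rule filterlim_at_top_mono[OF _ always_eventually])
    show "filterlim (\<lambda>N. nat \<lceil>\<beta> * real N\<rceil>) at_top sequentially"
      using \<beta> by real_asymp
  qed (simp add: preamble_length_def)
  then have "(\<lambda>N. (chernoff_coeff s (Q a) (Q star) * exp (s * \<theta>)) ^ preamble_length N) \<longlonglongrightarrow> 0"
    using chernoff chernoff_coeff_nonneg[of s "Q a" "Q star"]
    by (intro filterlim_compose[OF LIMSEQ_power_zero]) (auto simp: abs_of_nonneg)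
  moreover have "\<alpha> + ln 2 / k - \<beta> * \<theta> < 0" "ln 2 / k + ln b / j < 0"
    using false_alarm_rate confusion_rate by auto
  ultimately have "error_bound \<longlonglongrightarrow> 0 + 4 * 0 + 4 / b * 0"
    unfolding error_bound_def
    by (intro tendsto_add tendsto_mult tendsto_const tendsto_exp_linear_neg tendsto_mult_exp_linear_neg)
  then show ?thesis by simp
qed


lemma eventually_error_prob_le:
  assumes "\<alpha>\<^sub>0 \<le> \<alpha>" "0 < \<epsilon>"
  shows "eventually (\<lambda>N. error_prob Q star N (messages N) (code N) (decoder N (async_level \<alpha>\<^sub>0 \<epsilon> N))
                        (async_level \<alpha>\<^sub>0 \<epsilon> N) \<le> \<epsilon>) sequentially"
  using eventually_gv_condition order_tendstoD(2)[OF error_bound_tendsto_0 \<open>0 < \<epsilon>\<close>]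
proof eventually_elim
  case (elim N)
  then show ?case
    using error_prob_le_error_bound async_level_bounds[OF assms(1) \<alpha> assms(2)] by (meson less_imp_le order.trans)
qed
end

lemma exists_nat_div_less:
  fixes x c :: real
  assumes "0 < c"
  shows "\<exists>n>0. x / real n < c"
proof -
  obtain n :: nat where "\<bar>x\<bar> / c < real n" using reals_Archimedean2 by blast
  then have "x < c * real n" using assms by (simp add: field_simps)
  moreover have "n > 0"
    using \<open>\<bar>x\<bar> / c < real n\<close> assms divide_nonneg_pos[of "\<bar>x\<bar>" c] by linarith
  ultimately show ?thesis using assms by (intro exI[of _ n]) (simp add: field_simps)
qed

lemma exists_preamble_scheme:
  fixes Q :: "'x \<Rightarrow> 'y::finite pmf"
  assumes distinct: "Q a \<noteq> Q star" and \<alpha>: "ereal \<alpha> < kl_div (Q a) (Q star)"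
  shows "\<exists>\<alpha>' \<theta> s b \<beta> j k. \<alpha> \<le> \<alpha>' \<and> preamble_scheme Q star a \<alpha>' \<theta> s b \<beta> j k"
proof -
  define \<alpha>' where "\<alpha>' = max \<alpha> 0"
  have "ereal \<alpha>' < kl_div (Q a) (Q star)"
    using \<alpha> kl_div_pos[OF distinct] unfolding \<alpha>'_def by (auto simp: max_def zero_ereal_def)
  then obtain \<theta> where "ereal \<alpha>' < ereal \<theta>" "ereal \<theta> < kl_div (Q a) (Q star)"
    using ereal_dense2 by blast
  then have \<theta>: "\<alpha>' < \<theta>" "ereal \<theta> < kl_div (Q a) (Q star)" by simp_all
  have \<alpha>': "0 \<le> \<alpha>'" "\<alpha> \<le> \<alpha>'" unfolding \<alpha>'_def by auto
  obtain r where r: "r > 0" "\<forall>s>0. s < r \<longrightarrow> chernoff_coeff s (Q a) (Q star) * exp (s * \<theta>) < 1"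
    using eventually_chernoff_coeff_less_1[OF \<theta>(2)] unfolding eventually_at_right_field by auto
  define s where "s = min (r / 2) (1 / 2)"
  have s: "0 < s" "s < 1" "chernoff_coeff s (Q a) (Q star) * exp (s * \<theta>) < 1"
    using r unfolding s_def by auto
  define b where "b = max (bhattacharyya (Q a) (Q star)) (1/2)"
  have b: "bhattacharyya (Q a) (Q star) \<le> b" "0 < b" "b < 1"
    using bhattacharyya_less_1[OF distinct] unfolding b_def by auto
  define \<beta> where "\<beta> = (1 + \<alpha>' / \<theta>) / 2"
  have \<beta>: "0 < \<beta>" "\<beta> < 1" "\<alpha>' < \<beta> * \<theta>"
    using \<theta>(1) \<alpha>' unfolding \<beta>_def by (auto simp: field_simps)
  define c where "c = (1 - \<beta>) * ln (4/3) / 2"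
  have "c > 0" unfolding c_def using \<beta> by simp
  then obtain j :: nat where j: "j > 0" "ln 2 / j < c" using exists_nat_div_less by blast
  have "0 < min (min (\<beta> * \<theta> - \<alpha>') (- ln b / j)) c"
    using \<beta> b j \<open>c > 0\<close> by (simp add: divide_neg_pos)
  then obtain k :: nat where k: "k > 0" "ln 2 / k < min (min (\<beta> * \<theta> - \<alpha>') (- ln b / j)) c"
    using exists_nat_div_less by blast
  have "ln 2 / k + ln 2 / j < (1 - \<beta>) * ln (4/3)"
    using j(2) k(2) unfolding c_def by linarith
  then have "preamble_scheme Q star a \<alpha>' \<theta> s b \<beta> j k"
    using distinct s b \<alpha>' \<beta> j k by unfold_locales auto
  with \<alpha>' show ?thesis by blast
qed

lemma exists_distinguishable_maximizer:
  fixes Q :: "'x::finite \<Rightarrow> 'y::finite pmf"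
  assumes "capacity Q > 0"
  obtains a where "kl_div (Q a) (Q star) = (MAX x. kl_div (Q x) (Q star))" "Q a \<noteq> Q star"
proof -
  have "(MAX x. kl_div (Q x) (Q star)) \<in> range (\<lambda>x. kl_div (Q x) (Q star))" by (intro Max_in) auto
  then obtain a where a: "kl_div (Q a) (Q star) = (MAX x. kl_div (Q x) (Q star))"
    by (metis (mono_tags, lifting) imageE)
  obtain x where "Q x \<noteq> Q star" using capacity_pos_imp_nonconstant[OF assms] by blast
  then have "0 < kl_div (Q x) (Q star)" by (rule kl_div_pos)
  also have "\<dots> \<le> kl_div (Q a) (Q star)" unfolding a by simp
  finally have "Q a \<noteq> Q star" by (auto simp: kl_div_self)
  with a that show ?thesis by blast
qed

theorem proposition2:
  fixes Q :: "'x::finite \<Rightarrow> 'y::finite pmf" and star :: 'x and \<alpha> :: real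
  assumes "\<forall>y. \<exists>x. pmf (Q x) y > 0"
    and "capacity Q > 0"
    and "ereal \<alpha> < (MAX x. kl_div (Q x) (Q star))"
  shows "\<exists>(M :: nat \<Rightarrow> nat) (cw :: nat \<Rightarrow> nat \<Rightarrow> nat \<Rightarrow> 'x)
            (dec :: nat \<Rightarrow> nat \<Rightarrow> ((nat \<Rightarrow> 'y) \<Rightarrow> nat) \<times> ((nat \<Rightarrow> 'y) \<Rightarrow> nat)).
           (\<forall>N. M N \<ge> 2) \<and>
           (\<exists>L>0. (\<lambda>N. ln (real (M N)) / real N) \<longlonglongrightarrow> L) \<and>
           (\<forall>N A. valid_decoder (dec N A)) \<and>
           (\<forall>\<epsilon>>0. \<exists>N0. \<forall>N\<ge>N0.
              error_prob Q star N (M N) (cw N) (dec N (async_level \<alpha> \<epsilon> N))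
                (async_level \<alpha> \<epsilon> N) \<le> \<epsilon>)"
proof -
  obtain a where "kl_div (Q a) (Q star) = (MAX x. kl_div (Q x) (Q star))" "Q a \<noteq> Q star"
    using exists_distinguishable_maximizer[OF assms(2)] .
  then obtain \<alpha>' \<theta> s b \<beta> j k where "\<alpha> \<le> \<alpha>'" "preamble_scheme Q star a \<alpha>' \<theta> s b \<beta> j k"
    using exists_preamble_scheme assms(3) by metis
  then interpret preamble_scheme Q star a \<alpha>' \<theta> s b \<beta> j k by simp
  show ?thesis
  proof (intro exI[of _ messages] exI[of _ code] exI[of _ decoder] conjI allI impI)
    show "\<exists>L>0. (\<lambda>N. ln (real (messages N)) / real N) \<longlonglongrightarrow> L"
      using rate jk by (intro exI[of _ "ln 2 / real k"]) auto
    fix \<epsilon> :: real assume "\<epsilon> > 0"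
    then show "\<exists>N0. \<forall>N\<ge>N0. error_prob Q star N (messages N) (code N) (decoder N (async_level \<alpha> \<epsilon> N))
        (async_level \<alpha> \<epsilon> N) \<le> \<epsilon>"
      using eventually_error_prob_le[OF \<open>\<alpha> \<le> \<alpha>'\<close>] unfolding eventually_sequentially by blast
  qed (simp_all add: messages_ge_2 decoder_def valid_ml_decoder)
qed

end
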